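(* Let $D\subset\mathbb{R}$ be an open interval, $t_0\in D$, and let $y_1,\dots,y_m:D\to\mathbb{R}$ be analytic with differential transforms $Y_j(i)=\frac{1}{i!}\frac{d^i y_j}{dt^i}(t_0)$. Let $f(t,y_1,\dots,y_m)$ be an analytic function defined on a neighbourhood of $\{(t,y_1(t),\dots,y_m(t)):t\in D\}$, not of the product form $f_0(t)f_1(y_1)\cdots f_m(y_m)$, and let $F(n)=\frac{1}{n!}\left[\frac{d^n}{dt^n} f(t,y_1(t),\dots,y_m(t))\right]_{t=t_0}$, regarded as a function of the independent variables $t_0$ and $Y_j(k)$ ($1\le j\le m$, $0\le k\le n$) via $F(n)=\frac{1}{n!}\frac{d^n}{d\lambda^n}\big[f(t_0+\lambda,\sum_i Y_1(i)\lambda^i,\dots,\sum_i Y_m(i)\lambda^i)\big]_{\lambda=0}$. Then $F(0)=f(t_0,Y_1(0),\dots,Y_m(0))$ and, for $n=1,2,\dots$, $$F(n)=\frac{1}{n}\left(\frac{\partial}{\partial t_0}F(n-1)+\sum_{j=1}^{m}\sum_{k=0}^{n-1}(k+1)\,Y_j(k+1)\,\frac{\partial}{\partial Y_j(k)}F(n-1)\right).$$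
   Context: The differential transform of an analytic function $g$ at $t_0$ is the sequence $G(i)=\frac{1}{i!}g^{(i)}(t_0)$. *)

theory Defs
  imports "HOL-Analysis.Analysis"
begin

definition real_analytic_on :: "(real \<Rightarrow> real) \<Rightarrow> real set \<Rightarrow> bool" where
  "real_analytic_on g D \<longleftrightarrow>
     (\<forall>x\<in>D. \<exists>r>0. \<exists>c::nat \<Rightarrow> real.
        \<forall>z. \<bar>z - x\<bar> < r \<longrightarrow> (\<lambda>i. c i * (z - x) ^ i) sums g z)"

text \<open>Real analyticity of a function f(t, y_1, ..., y_m) (coordinates y indexed by the finite
  type 'm) on a set U: locally the sum of an (unconditionally, i.e. absolutely) convergent
  multivariate power series in (t - t', y - y').\<close>
definition mv_analytic_on :: "(real \<Rightarrow> real^'m \<Rightarrow> real) \<Rightarrow> (real \<times> (real^'m)) set \<Rightarrow> bool" where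
  "mv_analytic_on f U \<longleftrightarrow>
     (\<forall>p\<in>U. \<exists>r>0. \<exists>c::nat \<times> ('m \<Rightarrow> nat) \<Rightarrow> real.
        \<forall>s z. dist (s, z) p < r \<longrightarrow>
          ((\<lambda>(a, \<alpha>). c (a, \<alpha>) * (s - fst p) ^ a * (\<Prod>j\<in>UNIV. (z $ j - snd p $ j) ^ \<alpha> j))
             has_sum f s z) UNIV)"

definition product_form_on :: "(real \<Rightarrow> real^'m \<Rightarrow> real) \<Rightarrow> (real \<times> (real^'m)) set \<Rightarrow> bool" where
  "product_form_on f U \<longleftrightarrow>
     (\<exists>f0 fs. \<forall>(t, z)\<in>U. f t z = f0 t * (\<Prod>j\<in>UNIV. fs j (z $ j)))"

definition DT_F :: "(real \<Rightarrow> real^'m \<Rightarrow> real) \<Rightarrow> nat \<Rightarrow> real \<Rightarrow> ('m \<Rightarrow> nat \<Rightarrow> real) \<Rightarrow> real" where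
  "DT_F f n t0 Y =
     (deriv ^^ n) (\<lambda>l. f (t0 + l) (\<chi> j. \<Sum>i\<le>n. Y j i * l ^ i)) 0 / fact n"

end

theory Submission
  imports Defs "HOL-Complex_Analysis.Complex_Analysis"
begin

text \<open>Everything is complexified. Near \<open>(t0, y(t0))\<close> the function \<open>f\<close> is an absolutely
  convergent power series, so substituting small holomorphic functions of a complex variable \<open>w\<close>
  yields a holomorphic function whose derivatives at \<open>0\<close> can be taken term by term. Substituting
  \<open>t = t0 + w\<close> and the degree-\<open>n\<close> Taylor polynomials of the \<open>y\<^sub>j\<close> gives \<open>n! F(n)\<close>.
  For a single monomial, one differentiation in \<open>w\<close> produces, by the chain rule, exactly the
  partial derivatives with respect to \<open>t0\<close> and the \<open>Y\<^sub>j(k)\<close> (which enter every monomial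
  polynomially, so they too commute with the series); the remaining \<open>n - 1\<close> derivatives at \<open>0\<close>
  only see the Taylor polynomials of degree \<open>n - 1\<close>, whence \<open>F(n - 1)\<close> and the recursion.
  Finally, the degree-\<open>n\<close> polynomials and the complexified curve agree to order \<open>n\<close> at \<open>0\<close>,
  so \<open>F(n)\<close> is the Taylor coefficient of \<open>f(t, y(t))\<close>.\<close>

section \<open>Holomorphic series and real restrictions\<close>

lemma higher_deriv_sum:
  fixes f :: "'i \<Rightarrow> complex \<Rightarrow> complex"
  assumes "finite I" "\<And>i. i \<in> I \<Longrightarrow> f i holomorphic_on S" "open S" "z \<in> S"
  shows "(deriv ^^ n) (\<lambda>w. \<Sum>i\<in>I. f i w) z = (\<Sum>i\<in>I. (deriv ^^ n) (f i) z)"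
  using assms(1,2)
proof (induction I rule: finite_induct)
  case empty
  then show ?case by (cases n) simp_all
next
  case (insert x F)
  have "(deriv ^^ n) (\<lambda>w. f x w + (\<Sum>i\<in>F. f i w)) z
        = (deriv ^^ n) (f x) z + (deriv ^^ n) (\<lambda>w. \<Sum>i\<in>F. f i w) z"
    using insert assms(3,4) by (intro higher_deriv_add) (auto intro!: holomorphic_on_sum)
  then show ?case using insert by simp
qed

lemma has_sum_sum:
  fixes f :: "'i \<Rightarrow> 'a \<Rightarrow> 'b::topological_comm_monoid_add"
  assumes "finite I" "\<And>i. i \<in> I \<Longrightarrow> (f i has_sum s i) A"
  shows "((\<lambda>x. \<Sum>i\<in>I. f i x) has_sum (\<Sum>i\<in>I. s i)) A"
  using assms by (induction I rule: finite_induct) (simp_all add: has_sum_add)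

context
  fixes T :: "'i \<Rightarrow> complex \<Rightarrow> complex" and W :: "'i \<Rightarrow> real" and S :: "complex set"
  assumes S_open: "open S" and T_holomorphic: "\<And>i. T i holomorphic_on S"
    and T_dominated: "\<And>i x. x \<in> S \<Longrightarrow> norm (T i x) \<le> W i"
    and W_summable: "W summable_on UNIV"
begin

lemma uniform_limit_dominated_series:
  "uniform_limit S (\<lambda>X x. \<Sum>i\<in>X. T i x) (\<lambda>x. \<Sum>\<^sub>\<infinity>i. T i x) (finite_subsets_at_top UNIV)"
  by (rule Weierstrass_m_test_general[OF _ W_summable]) (use T_dominated in blast)

lemma holomorphic_on_dominated_series: "(\<lambda>x. \<Sum>\<^sub>\<infinity>i. T i x) holomorphic_on S"
proof -
  have "(\<lambda>x. \<Sum>\<^sub>\<infinity>i. T i x) holomorphic_on ball x r" if "cball x r \<subseteq> S" for x r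
  proof -
    have "\<forall>\<^sub>F X in finite_subsets_at_top UNIV.
            continuous_on (cball x r) (\<lambda>x. \<Sum>i\<in>X. T i x) \<and> (\<lambda>x. \<Sum>i\<in>X. T i x) holomorphic_on ball x r"
    proof (intro always_eventually allI conjI)
      fix X
      have hol: "(\<lambda>x. \<Sum>i\<in>X. T i x) holomorphic_on S" using T_holomorphic by (intro holomorphic_on_sum) auto
      show "(\<lambda>x. \<Sum>i\<in>X. T i x) holomorphic_on ball x r"
        using hol that ball_subset_cball by (blast intro: holomorphic_on_subset)
      show "continuous_on (cball x r) (\<lambda>x. \<Sum>i\<in>X. T i x)"
        by (rule holomorphic_on_imp_continuous_on, rule holomorphic_on_subset[OF hol that])
    qed
    moreover have "uniform_limit (cball x r) (\<lambda>X x. \<Sum>i\<in>X. T i x) (\<lambda>x. \<Sum>\<^sub>\<infinity>i. T i x)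
                     (finite_subsets_at_top UNIV)"
      using uniform_limit_dominated_series that uniform_limit_on_subset by blast
    ultimately show ?thesis by (rule holomorphic_uniform_limit) simp
  qed
  then have "(\<lambda>x. \<Sum>\<^sub>\<infinity>i. T i x) analytic_on S"
    unfolding analytic_on_def using S_open open_contains_cball by blast
  then show ?thesis by (rule analytic_imp_holomorphic)
qed

lemma has_sum_higher_deriv_dominated_series:
  assumes x: "x \<in> S"
  shows "((\<lambda>i. (deriv ^^ m) (T i) x) has_sum (deriv ^^ m) (\<lambda>x. \<Sum>\<^sub>\<infinity>i. T i x) x) UNIV"
proof -
  have "((\<lambda>X. (deriv ^^ m) (\<lambda>x. \<Sum>i\<in>X. T i x) x) \<longlongrightarrow> (deriv ^^ m) (\<lambda>x. \<Sum>\<^sub>\<infinity>i. T i x) x)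
          (finite_subsets_at_top UNIV)"
    by (rule higher_deriv_complex_uniform_limit[OF uniform_limit_dominated_series _ _ S_open x])
       (use T_holomorphic in \<open>blast intro: always_eventually holomorphic_on_sum\<close>, simp)
  moreover have "\<forall>\<^sub>F X in finite_subsets_at_top UNIV.
                   (deriv ^^ m) (\<lambda>x. \<Sum>i\<in>X. T i x) x = (\<Sum>i\<in>X. (deriv ^^ m) (T i) x)"
    by (rule eventually_finite_subsets_at_top_weakI)
       (rule higher_deriv_sum[OF _ T_holomorphic S_open x])
  ultimately have "((\<lambda>X. \<Sum>i\<in>X. (deriv ^^ m) (T i) x) \<longlongrightarrow> (deriv ^^ m) (\<lambda>x. \<Sum>\<^sub>\<infinity>i. T i x) x)
                    (finite_subsets_at_top UNIV)"
    using tendsto_cong by fast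
  then show ?thesis unfolding has_sum_def by simp
qed

end

lemma higher_deriv_real_restriction:
  fixes g :: "complex \<Rightarrow> complex" and h :: "real \<Rightarrow> real"
  assumes hol: "g holomorphic_on ball 0 R"
    and eq: "\<And>x. \<bar>x - x0\<bar> < R \<Longrightarrow> h x = Re (g (of_real (x - x0)))"
    and x: "\<bar>x - x0\<bar> < R"
  shows "(deriv ^^ n) h x = Re ((deriv ^^ n) g (of_real (x - x0)))"
  using x
proof (induction n arbitrary: x)
  case 0
  then show ?case using eq by simp
next
  case (Suc n)
  have in_ball: "of_real (y - x0) \<in> ball (0::complex) R" if "\<bar>y - x0\<bar> < R" for y
    using that by (simp flip: of_real_diff)
  have "((deriv ^^ n) g has_field_derivative (deriv ^^ Suc n) g (of_real (x - x0))) (at (of_real (x - x0)))"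
    by (rule has_field_derivative_higher_deriv[OF hol open_ball in_ball[OF Suc.prems]])
  from DERIV_chain2[OF this[unfolded of_real_diff] DERIV_diff[OF DERIV_ident DERIV_const]]
  have "((\<lambda>w. (deriv ^^ n) g (w - of_real x0)) has_field_derivative (deriv ^^ Suc n) g (of_real (x - x0)))
          (at (of_real x))"
    by simp
  then have "((\<lambda>y. Re ((deriv ^^ n) g (of_real (y - x0)))) has_field_derivative
               Re ((deriv ^^ Suc n) g (of_real (x - x0)))) (at x)"
    by (intro has_field_derivative_Re) (auto dest: has_vector_derivative_real_field)
  then have "((deriv ^^ n) h has_field_derivative Re ((deriv ^^ Suc n) g (of_real (x - x0)))) (at x)"
    by (rule has_field_derivative_transform_within_open[where S = "{y. \<bar>y - x0\<bar> < R}"])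
       (use Suc in \<open>auto intro!: open_Collect_less continuous_intros\<close>)
  then show ?case by (simp add: DERIV_imp_deriv)
qed

lemma deriv_Re_complex_restriction:
  fixes C :: "complex \<Rightarrow> complex" and \<phi> :: "real \<Rightarrow> real"
  assumes C: "(C has_field_derivative D) (at 0)" and \<delta>: "\<delta> > 0"
    and eq: "\<And>s. \<bar>s - x0\<bar> < \<delta> \<Longrightarrow> \<phi> s = Re (C (of_real (s - x0))) / K"
  shows "deriv \<phi> x0 = Re D / K"
proof -
  from DERIV_chain2[OF C[folded diff_self[of "of_real x0"]] DERIV_diff[OF DERIV_ident DERIV_const]]
  have "((\<lambda>w. C (w - of_real x0)) has_field_derivative D) (at (of_real x0))"
    by simp
  then have "((\<lambda>s. Re (C (of_real (s - x0))) / K) has_field_derivative Re D / K) (at x0)"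
    by (intro DERIV_cdivide has_field_derivative_Re) (auto dest: has_vector_derivative_real_field)
  then have "(\<phi> has_field_derivative Re D / K) (at x0)"
    by (rule has_field_derivative_transform_within_open[where S = "{s. \<bar>s - x0\<bar> < \<delta>}"])
       (use \<delta> eq in \<open>auto intro!: open_Collect_less continuous_intros\<close>)
  then show ?thesis by (rule DERIV_imp_deriv)
qed

lemma higher_deriv_power_at_0:
  "(deriv ^^ l) (\<lambda>w::complex. w ^ i) 0 = (if i = l then fact l else 0)"
  using higher_deriv_power[of l 0 i 0]
  by (cases i l rule: linorder_cases) (simp_all add: pochhammer_fact pochhammer_0_left power_0_left)

lemma ex_ball_uniformly_small:
  fixes \<phi> :: "'j::finite \<Rightarrow> complex \<Rightarrow> complex"
  assumes "\<And>j. isCont (\<phi> j) 0" "\<And>j. \<phi> j 0 = 0" "\<epsilon> > 0"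
  shows "\<exists>R>0. \<forall>w. norm w < R \<longrightarrow> (\<forall>j. norm (\<phi> j w) < \<epsilon>)"
proof -
  have "\<forall>\<^sub>F w in nhds 0. norm (\<phi> j w) < \<epsilon>" for j
  proof -
    have "\<forall>\<^sub>F w in nhds 0. w \<noteq> 0 \<longrightarrow> norm (\<phi> j w - \<phi> j 0) < \<epsilon>"
      using assms(1)[of j] assms(3) unfolding isCont_def
      by (simp add: tendsto_iff dist_norm eventually_at_filter)
    then show ?thesis by (rule eventually_mono) (use assms(2,3) in auto)
  qed
  then have "\<forall>\<^sub>F w in nhds 0. \<forall>j. norm (\<phi> j w) < \<epsilon>"
    by (simp add: eventually_all_finite)
  then show ?thesis unfolding eventually_nhds_metric by (auto simp: dist_norm)
qed

section \<open>Jets at the origin\<close>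

definition jet_eq :: "nat \<Rightarrow> (complex \<Rightarrow> complex) \<Rightarrow> (complex \<Rightarrow> complex) \<Rightarrow> bool" where
  "jet_eq m f g \<longleftrightarrow> (\<forall>i\<le>m. (deriv ^^ i) f 0 = (deriv ^^ i) g 0)"

lemma jet_eq_refl: "jet_eq m f f"
  by (simp add: jet_eq_def)

context
  fixes S :: "complex set"
  assumes S: "open S" "0 \<in> S"
begin

lemma jet_eq_mult:
  assumes "f1 holomorphic_on S" "f2 holomorphic_on S" "g1 holomorphic_on S" "g2 holomorphic_on S"
    and "jet_eq m f1 f2" "jet_eq m g1 g2"
  shows "jet_eq m (\<lambda>w. f1 w * g1 w) (\<lambda>w. f2 w * g2 w)"
  unfolding jet_eq_def
proof (intro allI impI)
  fix i assume "i \<le> m"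
  then show "(deriv ^^ i) (\<lambda>w. f1 w * g1 w) 0 = (deriv ^^ i) (\<lambda>w. f2 w * g2 w) 0"
    unfolding higher_deriv_mult[OF assms(1,3) S] higher_deriv_mult[OF assms(2,4) S]
    using assms(5,6) by (intro sum.cong refl) (auto simp: jet_eq_def)
qed

lemma jet_eq_power:
  assumes "f holomorphic_on S" "g holomorphic_on S" "jet_eq m f g"
  shows "jet_eq m (\<lambda>w. f w ^ k) (\<lambda>w. g w ^ k)"
proof (induction k)
  case 0
  then show ?case by (simp add: jet_eq_refl)
next
  case (Suc k)
  have "jet_eq m (\<lambda>w. f w * f w ^ k) (\<lambda>w. g w * g w ^ k)"
    using assms Suc by (intro jet_eq_mult) (auto intro!: holomorphic_intros)
  then show ?case by simp
qed

lemma jet_eq_prod: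
  fixes f g :: "'j \<Rightarrow> complex \<Rightarrow> complex"
  assumes "finite I" "\<And>j. j \<in> I \<Longrightarrow> f j holomorphic_on S" "\<And>j. j \<in> I \<Longrightarrow> g j holomorphic_on S"
    and "\<And>j. j \<in> I \<Longrightarrow> jet_eq m (f j) (g j)"
  shows "jet_eq m (\<lambda>w. \<Prod>j\<in>I. f j w) (\<lambda>w. \<Prod>j\<in>I. g j w)"
  using assms
proof (induction I rule: finite_induct)
  case empty
  then show ?case by (simp add: jet_eq_refl)
next
  case (insert x F)
  have "jet_eq m (\<lambda>w. f x w * (\<Prod>j\<in>F. f j w)) (\<lambda>w. g x w * (\<Prod>j\<in>F. g j w))"
    using insert by (intro jet_eq_mult) (auto intro!: holomorphic_intros)
  then show ?case using insert by simp
qed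

end

section \<open>Differentiating a series of holomorphic functions in a parameter\<close>

context
  fixes S :: "complex set"
  assumes S: "open S" "0 \<in> S"
begin

lemma higher_deriv_binomial_param:
  assumes hol: "A holomorphic_on S" "B holomorphic_on S" "G holomorphic_on S"
  shows "(deriv ^^ m) (\<lambda>w. (A w + \<mu> * B w) ^ e * G w) 0 =
           (\<Sum>i\<le>e. \<mu> ^ i * (of_nat (e choose i) * (deriv ^^ m) (\<lambda>w. B w ^ i * A w ^ (e - i) * G w) 0))"
proof -
  have expand: "(\<lambda>w. (A w + \<mu> * B w) ^ e * G w) =
                  (\<lambda>w. \<Sum>i\<le>e. \<mu> ^ i * (of_nat (e choose i) * (B w ^ i * A w ^ (e - i) * G w)))"
  proof
    fix w
    have "(A w + \<mu> * B w) ^ e = (\<Sum>i\<le>e. of_nat (e choose i) * (\<mu> * B w) ^ i * A w ^ (e - i))"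
      using binomial_ring[of "\<mu> * B w" "A w" e] by (simp add: add.commute)
    then show "(A w + \<mu> * B w) ^ e * G w =
                 (\<Sum>i\<le>e. \<mu> ^ i * (of_nat (e choose i) * (B w ^ i * A w ^ (e - i) * G w)))"
      by (simp add: sum_distrib_left sum_distrib_right power_mult_distrib mult_ac)
  qed
  have "(deriv ^^ m) (\<lambda>w. (A w + \<mu> * B w) ^ e * G w) 0 =
          (\<Sum>i\<le>e. (deriv ^^ m) (\<lambda>w. \<mu> ^ i * (of_nat (e choose i) * (B w ^ i * A w ^ (e - i) * G w))) 0)"
    unfolding expand using hol S by (intro higher_deriv_sum) (auto intro!: holomorphic_intros)
  also have "\<dots> = (\<Sum>i\<le>e. \<mu> ^ i * (of_nat (e choose i) * (deriv ^^ m) (\<lambda>w. B w ^ i * A w ^ (e - i) * G w) 0))"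
  proof (intro sum.cong refl)
    fix i
    define F where "F w = B w ^ i * A w ^ (e - i) * G w" for w
    have F: "F holomorphic_on S" using hol unfolding F_def by (intro holomorphic_intros)
    have "(deriv ^^ m) (\<lambda>w. \<mu> ^ i * (of_nat (e choose i) * F w)) 0
            = \<mu> ^ i * (deriv ^^ m) (\<lambda>w. of_nat (e choose i) * F w) 0"
      by (rule higher_deriv_cmult[OF _ S(2,1)]) (use F in \<open>intro holomorphic_intros\<close>)
    also have "\<dots> = \<mu> ^ i * (of_nat (e choose i) * (deriv ^^ m) F 0)"
      by (simp only: higher_deriv_cmult[OF F S(2,1)])
    finally show "(deriv ^^ m) (\<lambda>w. \<mu> ^ i * (of_nat (e choose i) * F w)) 0
                    = \<mu> ^ i * (of_nat (e choose i) * (deriv ^^ m) F 0)" .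
  qed
  finally show ?thesis .
qed

lemma has_field_derivative_higher_deriv_binomial_param:
  assumes hol: "A holomorphic_on S" "B holomorphic_on S" "G holomorphic_on S"
  shows "((\<lambda>\<mu>. (deriv ^^ m) (\<lambda>w. (A w + \<mu> * B w) ^ e * G w) 0) has_field_derivative
            of_nat e * (deriv ^^ m) (\<lambda>w. B w * A w ^ (e - 1) * G w) 0) (at 0)"
proof -
  define k where "k i = of_nat (e choose i) * (deriv ^^ m) (\<lambda>w. B w ^ i * A w ^ (e - i) * G w) 0" for i
  have poly: "(\<lambda>\<mu>. (deriv ^^ m) (\<lambda>w. (A w + \<mu> * B w) ^ e * G w) 0) = (\<lambda>\<mu>. \<Sum>i\<le>e. \<mu> ^ i * k i)"
    by (simp add: higher_deriv_binomial_param[OF hol] k_def)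
  have "((\<lambda>\<mu>. \<Sum>i\<le>e. \<mu> ^ i * k i) has_field_derivative (\<Sum>i\<le>e. of_nat i * 0 ^ (i - 1) * k i)) (at 0)"
    by (auto intro!: derivative_eq_intros)
  moreover have "(\<Sum>i\<le>e. of_nat i * 0 ^ (i - 1) * k i) = (\<Sum>i\<le>e. if i = 1 then k i else 0)"
    by (intro sum.cong) auto
  moreover have "(\<Sum>i\<le>e. if i = 1 then k i else 0) = of_nat e * (deriv ^^ m) (\<lambda>w. B w * A w ^ (e - 1) * G w) 0"
    by (simp add: sum.delta k_def)
  ultimately show ?thesis unfolding poly by simp
qed

end

lemma norm_higher_deriv_0_le:
  assumes "R > 0" "F holomorphic_on ball 0 R" "\<And>w. norm w < R \<Longrightarrow> norm (F w) \<le> B"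
  shows "norm ((deriv ^^ m) F 0) \<le> fact m * B / (R/2) ^ m"
proof (rule Cauchy_inequality)
  have "cball 0 (R/2) \<subseteq> ball 0 R"
    using assms(1) by (auto simp: subset_iff)
  then show "F holomorphic_on ball 0 (R/2)" "continuous_on (cball 0 (R/2)) F"
    using ball_subset_cball holomorphic_on_subset[OF assms(2)] holomorphic_on_imp_continuous_on by blast+
qed (use assms in auto)

lemma has_field_derivative_higher_deriv_param_series:
  fixes A B G :: "'i \<Rightarrow> complex \<Rightarrow> complex" and e :: "'i \<Rightarrow> nat" and d :: "'i \<Rightarrow> complex"
    and W :: "'i \<Rightarrow> real"
  assumes R: "R > 0" and \<delta>: "\<delta> > 0"
    and hol: "\<And>a. A a holomorphic_on ball 0 R" "\<And>a. B a holomorphic_on ball 0 R"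
      "\<And>a. G a holomorphic_on ball 0 R"
    and bound: "\<And>a \<mu> w. norm \<mu> < \<delta> \<Longrightarrow> norm w < R \<Longrightarrow>
                  norm (d a * ((A a w + \<mu> * B a w) ^ e a * G a w)) \<le> W a"
    and W: "W summable_on UNIV"
  shows "\<exists>D. ((\<lambda>\<mu>. (deriv ^^ m) (\<lambda>w. \<Sum>\<^sub>\<infinity>a. d a * ((A a w + \<mu> * B a w) ^ e a * G a w)) 0)
                 has_field_derivative D) (at 0)
           \<and> ((\<lambda>a. d a * of_nat (e a) * (deriv ^^ m) (\<lambda>w. B a w * A a w ^ (e a - 1) * G a w) 0)
                 has_sum D) UNIV"
proof -
  define T where "T a \<mu> = (deriv ^^ m) (\<lambda>w. d a * ((A a w + \<mu> * B a w) ^ e a * G a w)) 0" for a \<mu>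
  have ball: "open (ball (0::complex) R)" "(0::complex) \<in> ball 0 R" using R by auto
  have hol_term: "(\<lambda>w. d a * ((A a w + \<mu> * B a w) ^ e a * G a w)) holomorphic_on ball 0 R" for a \<mu>
    using hol by (intro holomorphic_intros)
  have T_eq: "T a \<mu> = d a * (deriv ^^ m) (\<lambda>w. (A a w + \<mu> * B a w) ^ e a * G a w) 0" for a \<mu>
    unfolding T_def using hol by (intro higher_deriv_cmult[OF _ ball(2,1)] holomorphic_intros)
  have T_hol: "T a holomorphic_on ball 0 \<delta>" for a
    unfolding T_eq higher_deriv_binomial_param[OF ball hol] by (intro holomorphic_intros)
  have T_deriv: "deriv (T a) 0 = d a * of_nat (e a) * (deriv ^^ m) (\<lambda>w. B a w * A a w ^ (e a - 1) * G a w) 0"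
    for a
  proof -
    have "(T a has_field_derivative
            d a * (of_nat (e a) * (deriv ^^ m) (\<lambda>w. B a w * A a w ^ (e a - 1) * G a w) 0)) (at 0)"
      unfolding T_eq[abs_def]
      by (rule DERIV_cmult[OF has_field_derivative_higher_deriv_binomial_param[OF ball hol]])
    then show ?thesis by (simp add: DERIV_imp_deriv mult.assoc)
  qed
  \<comment> \<open>Each \<open>T a\<close> is a polynomial in \<open>\<mu>\<close>, bounded uniformly by Cauchy's estimate; so the
      M-test lets us differentiate the series in \<open>\<mu>\<close> term by term.\<close>
  have T_bound: "norm (T a \<mu>) \<le> fact m * W a / (R/2) ^ m" if "\<mu> \<in> ball 0 \<delta>" for a \<mu>
    unfolding T_def using that by (intro norm_higher_deriv_0_le[OF R hol_term] bound) auto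
  have W': "(\<lambda>a. fact m * W a / (R/2) ^ m) summable_on UNIV"
    using summable_on_cmult_right[OF W, of "fact m / (R/2) ^ m"] by (simp add: field_simps)
  define S where "S \<mu> = (\<Sum>\<^sub>\<infinity>a. T a \<mu>)" for \<mu>
  have "S holomorphic_on ball 0 \<delta>"
    unfolding S_def using holomorphic_on_dominated_series[OF open_ball T_hol T_bound W'] by simp
  then have S_deriv: "(S has_field_derivative deriv S 0) (at 0)"
    using \<delta> by (intro holomorphic_derivI[of _ "ball 0 \<delta>"]) auto
  have "((\<lambda>a. deriv (T a) 0) has_sum deriv S 0) UNIV"
    using has_sum_higher_deriv_dominated_series[OF open_ball T_hol T_bound W', of 0 1] \<delta>
    by (simp add: S_def[abs_def])
  moreover have S_eq: "(deriv ^^ m) (\<lambda>w. \<Sum>\<^sub>\<infinity>a. d a * ((A a w + \<mu> * B a w) ^ e a * G a w)) 0 = S \<mu>"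
    if "\<mu> \<in> ball 0 \<delta>" for \<mu>
  proof -
    have "((\<lambda>a. T a \<mu>) has_sum (deriv ^^ m) (\<lambda>w. \<Sum>\<^sub>\<infinity>a. d a * ((A a w + \<mu> * B a w) ^ e a * G a w)) 0) UNIV"
      unfolding T_def
      by (rule has_sum_higher_deriv_dominated_series[OF ball(1) hol_term _ W ball(2)])
         (use that in \<open>auto intro!: bound\<close>)
    then show ?thesis unfolding S_def by (simp add: infsumI)
  qed
  moreover have "((\<lambda>\<mu>. (deriv ^^ m) (\<lambda>w. \<Sum>\<^sub>\<infinity>a. d a * ((A a w + \<mu> * B a w) ^ e a * G a w)) 0)
                   has_field_derivative deriv S 0) (at 0)"
    by (rule has_field_derivative_transform_within_open[OF S_deriv, of "ball 0 \<delta>"])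
       (use \<delta> S_eq in auto)
  ultimately show ?thesis by (auto simp: T_deriv)
qed

section \<open>Complex extensions of real analytic functions\<close>

lemma real_power_series_complex_extension:
  fixes y :: "real \<Rightarrow> real" and a :: "nat \<Rightarrow> real"
  assumes r: "r > 0" and sums: "\<And>x. \<bar>x - t0\<bar> < r \<Longrightarrow> (\<lambda>i. a i * (x - t0) ^ i) sums y x"
  obtains g where "g holomorphic_on ball 0 r"
    "\<And>x. \<bar>x - t0\<bar> < r \<Longrightarrow> g (of_real (x - t0)) = of_real (y x)"
    "\<And>l. (deriv ^^ l) g 0 = fact l * of_real (a l)"
proof
  define A where "A = Abs_fps (\<lambda>i. complex_of_real (a i))"
  have A_nth: "fps_nth A = (\<lambda>i. of_real (a i))" by (simp add: A_def fun_eq_iff)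
  have radius: "fps_conv_radius A \<ge> r"
    unfolding fps_conv_radius_def A_nth
  proof (rule conv_radius_geI_ex')
    fix s assume "0 < s" "ereal s < r"
    then have "summable (\<lambda>i. a i * s ^ i)"
      using sums[of "t0 + s"] by (auto dest: sums_summable)
    then have "summable (\<lambda>i. complex_of_real (a i * s ^ i))"
      by (rule summable_of_real)
    then show "summable (\<lambda>i. complex_of_real (a i) * of_real s ^ i)"
      by simp
  qed
  show "eval_fps A holomorphic_on ball 0 r"
    using radius by (intro holomorphic_on_eval_fps) (auto intro!: order.strict_trans2[OF _ radius])
  show "eval_fps A (of_real (x - t0)) = of_real (y x)" if "\<bar>x - t0\<bar> < r" for x
  proof -
    have "(\<lambda>i. complex_of_real (a i) * of_real (x - t0) ^ i) sums eval_fps A (of_real (x - t0))"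
      using that by (intro sums_eval_fps[of _ A, unfolded A_nth])
                    (auto intro!: order.strict_trans2[OF _ radius] simp flip: of_real_diff)
    moreover have "(\<lambda>i. complex_of_real (a i) * of_real (x - t0) ^ i) sums of_real (y x)"
      using sums_of_real[OF sums[OF that], where 'a = complex] by simp
    ultimately show ?thesis by (rule sums_unique2)
  qed
  show "(deriv ^^ l) (eval_fps A) 0 = fact l * of_real (a l)" for l
  proof -
    have "0 < fps_conv_radius A"
      using r by (auto intro: order.strict_trans2[OF _ radius])
    from fps_nth_conv_deriv[OF this, of l] show ?thesis by (simp add: A_nth field_simps)
  qed
qed

lemma real_analytic_on_complex_extension:
  assumes "real_analytic_on y D" "t0 \<in> D"
  obtains r g where "r > 0" "g holomorphic_on ball 0 r"
    "\<And>x. \<bar>x - t0\<bar> < r \<Longrightarrow> g (of_real (x - t0)) = of_real (y x)"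
    "\<And>l. (deriv ^^ l) g 0 = of_real ((deriv ^^ l) y t0)"
proof -
  obtain r a where r: "r > 0" and sums: "\<And>x. \<bar>x - t0\<bar> < r \<Longrightarrow> (\<lambda>i. a i * (x - t0) ^ i) sums y x"
    using assms unfolding real_analytic_on_def by blast
  obtain g where g: "g holomorphic_on ball 0 r"
      "\<And>x. \<bar>x - t0\<bar> < r \<Longrightarrow> g (of_real (x - t0)) = of_real (y x)"
      "\<And>l. (deriv ^^ l) g 0 = fact l * of_real (a l)"
    using real_power_series_complex_extension[OF r sums] by blast
  have "(deriv ^^ l) y t0 = Re ((deriv ^^ l) g (of_real (t0 - t0)))" for l
    by (rule higher_deriv_real_restriction[OF g(1)]) (use g(2) r in auto)
  then have "(deriv ^^ l) g 0 = of_real ((deriv ^^ l) y t0)" for l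
    by (simp add: g(3))
  with r g(1,2) show ?thesis by (rule that)
qed

lemma real_analytic_on_complex_extension_family:
  fixes y :: "'j::finite \<Rightarrow> real \<Rightarrow> real"
  assumes "\<And>j. real_analytic_on (y j) D" "t0 \<in> D"
  obtains R g where "R > 0" "\<And>j. g j holomorphic_on ball 0 R"
    "\<And>j x. \<bar>x - t0\<bar> < R \<Longrightarrow> g j (of_real (x - t0)) = of_real (y j x)"
    "\<And>j l. (deriv ^^ l) (g j) 0 = of_real ((deriv ^^ l) (y j) t0)"
proof -
  have "\<forall>j. \<exists>r g. r > 0 \<and> g holomorphic_on ball 0 r \<and>
          (\<forall>x. \<bar>x - t0\<bar> < r \<longrightarrow> g (of_real (x - t0)) = of_real (y j x)) \<and>
          (\<forall>l. (deriv ^^ l) g 0 = of_real ((deriv ^^ l) (y j) t0))"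
  proof
    fix j
    obtain r g where "r > 0" "g holomorphic_on ball 0 r"
      "\<And>x. \<bar>x - t0\<bar> < r \<Longrightarrow> g (of_real (x - t0)) = of_real (y j x)"
      "\<And>l. (deriv ^^ l) g 0 = of_real ((deriv ^^ l) (y j) t0)"
      by (rule real_analytic_on_complex_extension[OF assms(1) assms(2)]) (rule that)
    then show "\<exists>r g. r > 0 \<and> g holomorphic_on ball 0 r \<and>
          (\<forall>x. \<bar>x - t0\<bar> < r \<longrightarrow> g (of_real (x - t0)) = of_real (y j x)) \<and>
          (\<forall>l. (deriv ^^ l) g 0 = of_real ((deriv ^^ l) (y j) t0))"
      by blast
  qed
  then obtain r where "\<forall>j. \<exists>g. r j > 0 \<and> g holomorphic_on ball 0 (r j) \<and>
          (\<forall>x. \<bar>x - t0\<bar> < r j \<longrightarrow> g (of_real (x - t0)) = of_real (y j x)) \<and>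
          (\<forall>l. (deriv ^^ l) g 0 = of_real ((deriv ^^ l) (y j) t0))"
    by (rule choice[THEN exE])
  then obtain g where "\<forall>j. r j > 0 \<and> g j holomorphic_on ball 0 (r j) \<and>
          (\<forall>x. \<bar>x - t0\<bar> < r j \<longrightarrow> g j (of_real (x - t0)) = of_real (y j x)) \<and>
          (\<forall>l. (deriv ^^ l) (g j) 0 = of_real ((deriv ^^ l) (y j) t0))"
    by (rule choice[THEN exE])
  then have r: "\<And>j. r j > 0" and g: "\<And>j. g j holomorphic_on ball 0 (r j)"
    "\<And>j x. \<bar>x - t0\<bar> < r j \<Longrightarrow> g j (of_real (x - t0)) = of_real (y j x)"
    "\<And>j l. (deriv ^^ l) (g j) 0 = of_real ((deriv ^^ l) (y j) t0)"
    by blast+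
  define R where "R = Min (range r)"
  have R: "R > 0" "\<And>j. R \<le> r j"
    using r by (auto simp: R_def)
  show ?thesis
  proof (rule that[of R g])
    show "g j holomorphic_on ball 0 R" for j
      by (rule holomorphic_on_subset[OF g(1)]) (use R(2)[of j] in auto)
    show "g j (of_real (x - t0)) = of_real (y j x)" if "\<bar>x - t0\<bar> < R" for j x
      using g(2) R(2)[of j] that by auto
  qed (use R g(3) in auto)
qed

section \<open>Monomials in truncated Taylor polynomials\<close>

definition taylor_incr :: "(nat \<Rightarrow> complex) \<Rightarrow> nat \<Rightarrow> complex \<Rightarrow> complex" where
  "taylor_incr c N w = (\<Sum>k<N. c (Suc k) * w ^ Suc k)"

lemma holomorphic_on_taylor_incr [holomorphic_intros]: "taylor_incr c N holomorphic_on S"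
  unfolding taylor_incr_def by (intro holomorphic_intros)

lemma taylor_incr_0 [simp]: "taylor_incr c N 0 = 0"
  by (simp add: taylor_incr_def)

lemma has_field_derivative_taylor_incr:
  "(taylor_incr c N has_field_derivative (\<Sum>k<N. of_nat (Suc k) * c (Suc k) * w ^ k)) (at w)"
proof -
  have "((\<lambda>w. c (Suc k) * w ^ Suc k) has_field_derivative of_nat (Suc k) * c (Suc k) * w ^ k) (at w)" for k
    using DERIV_cmult[OF DERIV_power_Suc[OF DERIV_ident, where n = k], of "c (Suc k)"] by (simp add: mult_ac)
  then show ?thesis unfolding taylor_incr_def[abs_def] by (intro DERIV_sum)
qed

lemma higher_deriv_taylor_incr_0:
  "(deriv ^^ l) (taylor_incr c N) 0 = (if 1 \<le> l \<and> l \<le> N then fact l * c l else 0)"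
proof -
  have "(deriv ^^ l) (taylor_incr c N) 0 = (\<Sum>k<N. (deriv ^^ l) (\<lambda>w. c (Suc k) * w ^ Suc k) 0)"
    unfolding taylor_incr_def[abs_def] by (rule higher_deriv_sum[of _ _ UNIV]) (auto intro!: holomorphic_intros)
  also have "\<dots> = (\<Sum>k<N. c (Suc k) * (if Suc k = l then fact l else 0))"
    by (intro sum.cong refl, subst higher_deriv_cmult[of _ UNIV])
       (auto intro!: holomorphic_intros simp: higher_deriv_power_at_0 simp del: power_Suc)
  also have "\<dots> = (if 1 \<le> l \<and> l \<le> N then fact l * c l else 0)"
    by (cases l) (auto simp: if_distrib sum.delta mult.commute cong: if_cong)
  finally show ?thesis .
qed

lemma jet_eq_taylor_incr: "m \<le> N \<Longrightarrow> m \<le> M \<Longrightarrow> jet_eq m (taylor_incr c N) (taylor_incr c M)"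
  by (auto simp: jet_eq_def higher_deriv_taylor_incr_0)

lemma has_field_derivative_power_prod_taylor_incr:
  fixes c :: "'m::finite \<Rightarrow> nat \<Rightarrow> complex" and \<beta> :: "'m \<Rightarrow> nat"
  shows "((\<lambda>w. w ^ a * (\<Prod>j\<in>UNIV. taylor_incr (c j) N w ^ \<beta> j)) has_field_derivative
     (of_nat a * (w ^ (a - 1) * (\<Prod>j\<in>UNIV. taylor_incr (c j) N w ^ \<beta> j)) +
      (\<Sum>j\<in>UNIV. \<Sum>k<N. of_nat (Suc k) * c j (Suc k) *
          (of_nat (\<beta> j) * (w ^ k * taylor_incr (c j) N w ^ (\<beta> j - 1) *
             (w ^ a * (\<Prod>i\<in>UNIV - {j}. taylor_incr (c i) N w ^ \<beta> i))))))) (at w)"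
proof -
  have prod: "((\<lambda>w. \<Prod>j\<in>UNIV. taylor_incr (c j) N w ^ \<beta> j) has_field_derivative
          (\<Sum>j\<in>UNIV. (of_nat (\<beta> j) * taylor_incr (c j) N w ^ (\<beta> j - 1) *
                         (\<Sum>k<N. of_nat (Suc k) * c j (Suc k) * w ^ k))
                      * (\<Prod>i\<in>UNIV - {j}. taylor_incr (c i) N w ^ \<beta> i))) (at w)"
    by (rule has_field_derivative_prod) (auto intro!: derivative_eq_intros has_field_derivative_taylor_incr)
  have "((\<lambda>w. w ^ a * (\<Prod>j\<in>UNIV. taylor_incr (c j) N w ^ \<beta> j)) has_field_derivative
     (of_nat a * w ^ (a - 1) * (\<Prod>j\<in>UNIV. taylor_incr (c j) N w ^ \<beta> j) +
      w ^ a * (\<Sum>j\<in>UNIV. (of_nat (\<beta> j) * taylor_incr (c j) N w ^ (\<beta> j - 1) *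
                              (\<Sum>k<N. of_nat (Suc k) * c j (Suc k) * w ^ k))
                           * (\<Prod>i\<in>UNIV - {j}. taylor_incr (c i) N w ^ \<beta> i)))) (at w)"
    by (rule derivative_eq_intros prod refl)+ (simp add: mult_ac)
  then show ?thesis
    by (rule DERIV_cong) (simp add: sum_distrib_left sum_distrib_right mult_ac)
qed

lemma higher_deriv_Suc_power_prod_taylor_incr:
  fixes c :: "'m::finite \<Rightarrow> nat \<Rightarrow> complex" and \<beta> :: "'m \<Rightarrow> nat"
  shows "(deriv ^^ Suc m) (\<lambda>w. w ^ a * (\<Prod>j\<in>UNIV. taylor_incr (c j) N w ^ \<beta> j)) 0 =
     of_nat a * (deriv ^^ m) (\<lambda>w. w ^ (a - 1) * (\<Prod>j\<in>UNIV. taylor_incr (c j) N w ^ \<beta> j)) 0 +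
      (\<Sum>j\<in>UNIV. \<Sum>k<N. of_nat (Suc k) * c j (Suc k) *
          (of_nat (\<beta> j) * (deriv ^^ m) (\<lambda>w. w ^ k * taylor_incr (c j) N w ^ (\<beta> j - 1) *
             (w ^ a * (\<Prod>i\<in>UNIV - {j}. taylor_incr (c i) N w ^ \<beta> i))) 0))"
proof -
  define F1 where "F1 w = w ^ (a - 1) * (\<Prod>j\<in>UNIV. taylor_incr (c j) N w ^ \<beta> j)" for w
  define F2 where "F2 j k w = w ^ k * taylor_incr (c j) N w ^ (\<beta> j - 1) *
                                (w ^ a * (\<Prod>i\<in>UNIV - {j}. taylor_incr (c i) N w ^ \<beta> i))" for j k w
  have hol: "F1 holomorphic_on UNIV" "F2 j k holomorphic_on UNIV" for j k
    unfolding F1_def F2_def by (intro holomorphic_intros)+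
  have cmult: "(deriv ^^ m) (\<lambda>w. x * F w) 0 = x * (deriv ^^ m) F 0" if "F holomorphic_on UNIV" for x F
    using higher_deriv_cmult[OF that] by simp
  have "deriv (\<lambda>w. w ^ a * (\<Prod>j\<in>UNIV. taylor_incr (c j) N w ^ \<beta> j)) =
          (\<lambda>w. of_nat a * F1 w + (\<Sum>j\<in>UNIV. \<Sum>k<N. of_nat (Suc k) * c j (Suc k) * (of_nat (\<beta> j) * F2 j k w)))"
    unfolding F1_def F2_def by (intro ext DERIV_imp_deriv has_field_derivative_power_prod_taylor_incr)
  then have "(deriv ^^ Suc m) (\<lambda>w. w ^ a * (\<Prod>j\<in>UNIV. taylor_incr (c j) N w ^ \<beta> j)) 0 =
     (deriv ^^ m) (\<lambda>w. of_nat a * F1 w + (\<Sum>j\<in>UNIV. \<Sum>k<N. of_nat (Suc k) * c j (Suc k) * (of_nat (\<beta> j) * F2 j k w))) 0"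
    by (simp add: funpow_Suc_right del: funpow.simps)
  also have "\<dots> = of_nat a * (deriv ^^ m) F1 0 +
      (\<Sum>j\<in>UNIV. \<Sum>k<N. of_nat (Suc k) * c j (Suc k) * (of_nat (\<beta> j) * (deriv ^^ m) (F2 j k) 0))"
    using hol by (simp add: higher_deriv_add[of _ UNIV] higher_deriv_sum[of _ _ UNIV] cmult holomorphic_intros)
  finally show ?thesis unfolding F1_def F2_def .
qed

text \<open>Only derivatives of order \<open>\<le> m\<close> of the factors enter the right-hand side, so the
  truncations of degree \<open>n\<close> may be replaced by those of degree \<open>m\<close>.\<close>
lemma higher_deriv_Suc_power_prod_taylor_incr_jet:
  fixes c :: "'m::finite \<Rightarrow> nat \<Rightarrow> complex" and \<beta> :: "'m \<Rightarrow> nat"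
  assumes "m \<le> n"
  shows "(deriv ^^ Suc m) (\<lambda>w. w ^ a * (\<Prod>j\<in>UNIV. taylor_incr (c j) n w ^ \<beta> j)) 0 =
     of_nat a * (deriv ^^ m) (\<lambda>w. w ^ (a - 1) * (\<Prod>j\<in>UNIV. taylor_incr (c j) m w ^ \<beta> j)) 0 +
      (\<Sum>j\<in>UNIV. \<Sum>k<n. of_nat (Suc k) * c j (Suc k) *
          (of_nat (\<beta> j) * (deriv ^^ m) (\<lambda>w. w ^ k * taylor_incr (c j) m w ^ (\<beta> j - 1) *
             (w ^ a * (\<Prod>i\<in>UNIV - {j}. taylor_incr (c i) m w ^ \<beta> i))) 0))"
proof -
  have jet: "jet_eq m (taylor_incr (c j) n) (taylor_incr (c j) m)" for j
    using assms by (intro jet_eq_taylor_incr) auto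
  have "jet_eq m (\<lambda>w. w ^ (a - 1) * (\<Prod>j\<in>UNIV. taylor_incr (c j) n w ^ \<beta> j))
                 (\<lambda>w. w ^ (a - 1) * (\<Prod>j\<in>UNIV. taylor_incr (c j) m w ^ \<beta> j))"
   and "jet_eq m (\<lambda>w. w ^ k * taylor_incr (c j) n w ^ (\<beta> j - 1) *
                         (w ^ a * (\<Prod>i\<in>UNIV - {j}. taylor_incr (c i) n w ^ \<beta> i)))
                 (\<lambda>w. w ^ k * taylor_incr (c j) m w ^ (\<beta> j - 1) *
                         (w ^ a * (\<Prod>i\<in>UNIV - {j}. taylor_incr (c i) m w ^ \<beta> i)))" for j k
    by (intro jet_eq_mult[of UNIV] jet_eq_refl jet_eq_prod[of UNIV] jet_eq_power[of UNIV] jet;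
        auto intro!: holomorphic_intros)+
  then show ?thesis
    unfolding higher_deriv_Suc_power_prod_taylor_incr by (simp add: jet_eq_def)
qed

definition mv_monomial :: "nat \<times> ('m::finite \<Rightarrow> nat) \<Rightarrow> 'a::comm_monoid_mult \<Rightarrow> ('m \<Rightarrow> 'a) \<Rightarrow> 'a" where
  "mv_monomial a u z = u ^ fst a * (\<Prod>j\<in>UNIV. z j ^ snd a j)"

definition mv_degree :: "nat \<times> ('m::finite \<Rightarrow> nat) \<Rightarrow> nat" where
  "mv_degree a = fst a + (\<Sum>j\<in>UNIV. snd a j)"

lemma of_real_mv_monomial:
  "of_real (mv_monomial a u z) = mv_monomial a (of_real u) (\<lambda>j. of_real (z j) :: 'a::real_field)"
  by (simp add: mv_monomial_def)

lemma norm_mv_monomial_le: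
  fixes u :: "'a::real_normed_field"
  assumes "norm u \<le> \<rho>" "\<And>j. norm (z j) \<le> \<rho>"
  shows "norm (mv_monomial a u z) \<le> \<rho> ^ mv_degree a"
proof -
  have "0 \<le> \<rho>" using assms(1) norm_ge_zero order_trans by blast
  have "norm (mv_monomial a u z) = norm u ^ fst a * (\<Prod>j\<in>UNIV. norm (z j) ^ snd a j)"
    by (simp add: mv_monomial_def norm_mult norm_power flip: prod_norm)
  also have "\<dots> \<le> \<rho> ^ fst a * (\<Prod>j\<in>UNIV. \<rho> ^ snd a j)"
    using \<open>0 \<le> \<rho>\<close> by (intro mult_mono power_mono prod_mono conjI assms) (auto intro!: prod_nonneg)
  also have "\<dots> = \<rho> ^ mv_degree a" by (simp add: mv_degree_def power_add power_sum)
  finally show ?thesis .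
qed

lemma mv_monomial_split:
  "mv_monomial a u z = z j ^ snd a j * (u ^ fst a * (\<Prod>i\<in>UNIV - {j}. z i ^ snd a i))"
  by (simp add: mv_monomial_def prod.remove[of UNIV j] mult_ac)

section \<open>The complexified local expansion of \<open>f\<close>\<close>

locale local_expansion =
  fixes f :: "real \<Rightarrow> real^'m \<Rightarrow> real" and c :: "nat \<times> ('m::finite \<Rightarrow> nat) \<Rightarrow> real"
    and t0 \<rho> :: real and z0 :: "'m \<Rightarrow> real"
  assumes radius_pos: "\<rho> > 0"
    and expansion: "\<And>u v. \<bar>u\<bar> \<le> \<rho> \<Longrightarrow> (\<And>j. \<bar>v $ j - z0 j\<bar> \<le> \<rho>) \<Longrightarrow>
                      ((\<lambda>a. c a * mv_monomial a u (\<lambda>j. v $ j - z0 j)) has_sum f (t0 + u) v) UNIV"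
    and abs_summable: "(\<lambda>a. \<bar>c a\<bar> * \<rho> ^ mv_degree a) summable_on UNIV"
begin

text \<open>\<open>compose_series \<phi>0 \<phi> w = F (\<phi>0 w) (\<phi> w)\<close>, where \<open>F\<close> is the complexification of
  \<open>(u, z) \<mapsto> f (t0 + u) (z0 + z)\<close>.\<close>
definition compose_series :: "(complex \<Rightarrow> complex) \<Rightarrow> ('m \<Rightarrow> complex \<Rightarrow> complex) \<Rightarrow> complex \<Rightarrow> complex" where
  "compose_series \<phi>0 \<phi> w = (\<Sum>\<^sub>\<infinity>a. of_real (c a) * mv_monomial a (\<phi>0 w) (\<lambda>j. \<phi> j w))"

lemma compose_series_of_real:
  assumes "\<phi>0 w = of_real u" "\<And>j. \<phi> j w = of_real (v $ j - z0 j)"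
    and "\<bar>u\<bar> \<le> \<rho>" "\<And>j. \<bar>v $ j - z0 j\<bar> \<le> \<rho>"
  shows "compose_series \<phi>0 \<phi> w = of_real (f (t0 + u) v)"
  using has_sum_of_real[OF expansion[OF assms(3,4)], where 'a = complex]
  by (simp add: compose_series_def assms(1,2) of_real_mv_monomial infsumI)

context
  fixes \<phi>0 :: "complex \<Rightarrow> complex" and \<phi> :: "'m \<Rightarrow> complex \<Rightarrow> complex" and S :: "complex set"
  assumes S: "open S" and hol: "\<phi>0 holomorphic_on S" "\<And>j. \<phi> j holomorphic_on S"
    and bounded: "\<And>w. w \<in> S \<Longrightarrow> norm (\<phi>0 w) \<le> \<rho>" "\<And>w j. w \<in> S \<Longrightarrow> norm (\<phi> j w) \<le> \<rho>"
begin

lemma holomorphic_mv_monomial_comp: "(\<lambda>w. mv_monomial a (\<phi>0 w) (\<lambda>j. \<phi> j w)) holomorphic_on S"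
  unfolding mv_monomial_def using hol by (intro holomorphic_intros)

lemma compose_series_term_bound:
  "w \<in> S \<Longrightarrow> norm (of_real (c a) * mv_monomial a (\<phi>0 w) (\<lambda>j. \<phi> j w)) \<le> \<bar>c a\<bar> * \<rho> ^ mv_degree a"
  unfolding norm_mult norm_of_real by (intro mult_left_mono norm_mv_monomial_le bounded) auto

lemma holomorphic_on_compose_series: "compose_series \<phi>0 \<phi> holomorphic_on S"
  unfolding compose_series_def[abs_def]
  by (rule holomorphic_on_dominated_series[OF S _ compose_series_term_bound abs_summable])
     (intro holomorphic_intros holomorphic_mv_monomial_comp)

lemma has_sum_higher_deriv_compose_series:
  assumes "x \<in> S"
  shows "((\<lambda>a. of_real (c a) * (deriv ^^ m) (\<lambda>w. mv_monomial a (\<phi>0 w) (\<lambda>j. \<phi> j w)) x)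
           has_sum (deriv ^^ m) (compose_series \<phi>0 \<phi>) x) UNIV"
proof -
  have "(\<lambda>w. of_real (c a) * mv_monomial a (\<phi>0 w) (\<lambda>j. \<phi> j w)) holomorphic_on S" for a
    by (intro holomorphic_intros holomorphic_mv_monomial_comp)
  from has_sum_higher_deriv_dominated_series[OF S this compose_series_term_bound abs_summable assms]
  show ?thesis
    by (simp add: compose_series_def[abs_def] higher_deriv_cmult[OF holomorphic_mv_monomial_comp assms S])
qed

end

lemma higher_deriv_compose_series_real:
  fixes \<phi>0 :: "complex \<Rightarrow> complex" and \<phi> :: "'m \<Rightarrow> complex \<Rightarrow> complex"
    and h u :: "real \<Rightarrow> real" and v :: "real \<Rightarrow> real^'m"
  assumes R: "R > 0" and hol: "\<phi>0 holomorphic_on ball 0 R" "\<And>j. \<phi> j holomorphic_on ball 0 R"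
    and bounded: "\<And>w. norm w < R \<Longrightarrow> norm (\<phi>0 w) \<le> \<rho>" "\<And>w j. norm w < R \<Longrightarrow> norm (\<phi> j w) \<le> \<rho>"
    and real: "\<And>x. \<bar>x - x0\<bar> < R \<Longrightarrow> \<phi>0 (of_real (x - x0)) = of_real (u x)"
      "\<And>x j. \<bar>x - x0\<bar> < R \<Longrightarrow> \<phi> j (of_real (x - x0)) = of_real (v x $ j - z0 j)"
    and h: "\<And>x. \<bar>x - x0\<bar> < R \<Longrightarrow> h x = f (t0 + u x) (v x)"
  shows "(deriv ^^ N) h x0 = Re ((deriv ^^ N) (compose_series \<phi>0 \<phi>) 0)"
proof -
  have "(deriv ^^ N) h x0 = Re ((deriv ^^ N) (compose_series \<phi>0 \<phi>) (of_real (x0 - x0)))"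
  proof (rule higher_deriv_real_restriction)
    show "compose_series \<phi>0 \<phi> holomorphic_on ball 0 R"
      by (rule holomorphic_on_compose_series[OF open_ball hol]) (use bounded in auto)
    fix x assume x: "\<bar>x - x0\<bar> < R"
    then have small: "norm (of_real (x - x0) :: complex) < R" by (simp flip: of_real_diff)
    have "\<bar>u x\<bar> \<le> \<rho>" using bounded(1)[OF small] real(1)[OF x] by (metis norm_of_real)
    moreover have "\<bar>v x $ j - z0 j\<bar> \<le> \<rho>" for j
      using bounded(2)[OF small] real(2)[OF x] by (metis norm_of_real)
    ultimately have "compose_series \<phi>0 \<phi> (of_real (x - x0)) = of_real (f (t0 + u x) (v x))"
      by (intro compose_series_of_real real[OF x])
    then show "h x = Re (compose_series \<phi>0 \<phi> (of_real (x - x0)))"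
      by (simp only: h[OF x] Re_complex_of_real)
  qed (use R in auto)
  then show ?thesis by simp
qed

lemma higher_deriv_compose_series_jet_eq:
  fixes \<phi>0 :: "complex \<Rightarrow> complex" and \<phi> \<phi>' :: "'m \<Rightarrow> complex \<Rightarrow> complex"
  assumes R: "R > 0"
    and hol: "\<phi>0 holomorphic_on ball 0 R" "\<And>j. \<phi> j holomorphic_on ball 0 R" "\<And>j. \<phi>' j holomorphic_on ball 0 R"
    and bounded: "\<And>w. norm w < R \<Longrightarrow> norm (\<phi>0 w) \<le> \<rho>" "\<And>w j. norm w < R \<Longrightarrow> norm (\<phi> j w) \<le> \<rho>"
      "\<And>w j. norm w < R \<Longrightarrow> norm (\<phi>' j w) \<le> \<rho>"
    and jet: "\<And>j. jet_eq n (\<phi> j) (\<phi>' j)"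
  shows "(deriv ^^ n) (compose_series \<phi>0 \<phi>) 0 = (deriv ^^ n) (compose_series \<phi>0 \<phi>') 0"
proof -
  have ball: "open (ball (0::complex) R)" "(0::complex) \<in> ball 0 R" using R by auto
  have "jet_eq n (\<lambda>w. mv_monomial a (\<phi>0 w) (\<lambda>j. \<phi> j w)) (\<lambda>w. mv_monomial a (\<phi>0 w) (\<lambda>j. \<phi>' j w))" for a
    unfolding mv_monomial_def using hol
    by (intro jet_eq_mult[OF ball] jet_eq_refl jet_eq_prod[OF ball] jet_eq_power[OF ball] jet)
       (auto intro!: holomorphic_intros)
  then have "((\<lambda>a. of_real (c a) * (deriv ^^ n) (\<lambda>w. mv_monomial a (\<phi>0 w) (\<lambda>j. \<phi> j w)) 0)
               has_sum (deriv ^^ n) (compose_series \<phi>0 \<phi>') 0) UNIV"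
    using has_sum_higher_deriv_compose_series[OF open_ball hol(1,3) _ _ ball(2)] bounded
    by (simp add: jet_eq_def)
  moreover have "((\<lambda>a. of_real (c a) * (deriv ^^ n) (\<lambda>w. mv_monomial a (\<phi>0 w) (\<lambda>j. \<phi> j w)) 0)
                    has_sum (deriv ^^ n) (compose_series \<phi>0 \<phi>) 0) UNIV"
    using has_sum_higher_deriv_compose_series[OF open_ball hol(1,2) _ _ ball(2)] bounded by simp
  ultimately show ?thesis using has_sum_unique by blast
qed

end

section \<open>The differential transform\<close>

locale DT_expansion = local_expansion f c t0 \<rho> z0
  for f :: "real \<Rightarrow> real^'m \<Rightarrow> real" and c :: "nat \<times> ('m::finite \<Rightarrow> nat) \<Rightarrow> real"
    and t0 \<rho> :: real and z0 :: "'m \<Rightarrow> real" +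
  fixes Y :: "'m \<Rightarrow> nat \<Rightarrow> real"
  assumes Y_0: "\<And>j. Y j 0 = z0 j"
begin

abbreviation Y_incr :: "nat \<Rightarrow> 'm \<Rightarrow> complex \<Rightarrow> complex" where
  "Y_incr N j \<equiv> taylor_incr (\<lambda>i. of_real (Y j i)) N"

lemma Y_incr_of_real: "Y_incr N j (of_real x) = of_real ((\<Sum>i\<le>N. Y j i * x ^ i) - z0 j)"
  by (simp add: taylor_incr_def sum.atMost_shift Y_0)

lemma Y_incr_small:
  assumes "\<epsilon> > 0"
  obtains R where "R > 0" "\<And>w j. norm w < R \<Longrightarrow> norm (Y_incr N j w) < \<epsilon>"
proof -
  have "isCont (Y_incr N j) 0" for j
    unfolding taylor_incr_def by (intro continuous_intros)
  then show ?thesis using ex_ball_uniformly_small[of "Y_incr N", OF _ _ assms] that by force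
qed

lemma Y_incr_perturbation_radius:
  obtains R where "R > 0" "R \<le> \<rho>/2"
    "\<And>w \<nu> j. norm w < R \<Longrightarrow> norm \<nu> < \<rho>/2 \<Longrightarrow> norm (Y_incr N j w + \<nu> * w ^ k) \<le> \<rho>"
proof -
  obtain R1 where R1: "R1 > 0" "\<And>w j. norm w < R1 \<Longrightarrow> norm (Y_incr N j w) < \<rho>/2"
    using Y_incr_small[of "\<rho>/2"] radius_pos by auto
  define R where "R = min R1 (min (\<rho>/2) 1)"
  have "norm (Y_incr N j w + \<nu> * w ^ k) \<le> \<rho>" if w: "norm w < R" and \<nu>: "norm \<nu> < \<rho>/2" for w \<nu> j
  proof -
    have "norm w ^ k \<le> 1" using w by (simp add: R_def power_le_one)
    then have "norm (\<nu> * w ^ k) \<le> norm \<nu>" by (simp add: norm_mult norm_power mult_left_le)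
    moreover have "norm (Y_incr N j w) < \<rho>/2" using R1(2) w by (simp add: R_def)
    ultimately show ?thesis using \<nu> norm_triangle_ineq[of "Y_incr N j w" "\<nu> * w ^ k"] by linarith
  qed
  moreover have "R > 0" "R \<le> \<rho>/2" using R1 radius_pos by (auto simp: R_def)
  ultimately show ?thesis by (intro that)
qed

lemma DT_F_eq_higher_deriv_compose_series:
  assumes "\<bar>s - t0\<bar> < \<rho>/2"
  shows "DT_F f N s Y = Re ((deriv ^^ N) (compose_series (\<lambda>w. of_real (s - t0) + w) (Y_incr N)) 0) / fact N"
proof -
  obtain R where R: "R > 0" "R \<le> \<rho>/2"
    "\<And>w \<nu> j. norm w < R \<Longrightarrow> norm \<nu> < \<rho>/2 \<Longrightarrow> norm (Y_incr N j w + \<nu> * w ^ 0) \<le> \<rho>"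
    using Y_incr_perturbation_radius[of N 0] by blast
  have Y_incr_bound: "norm (Y_incr N j w) \<le> \<rho>" if "norm w < R" for w j
    using R(3)[OF that, of 0] radius_pos by simp
  have "(deriv ^^ N) (\<lambda>l. f (s + l) (\<chi> j. \<Sum>i\<le>N. Y j i * l ^ i)) 0 =
          Re ((deriv ^^ N) (compose_series (\<lambda>w. of_real (s - t0) + w) (Y_incr N)) 0)"
  proof (rule higher_deriv_compose_series_real[where R = R and u = "\<lambda>l. s - t0 + l"
                                                 and v = "\<lambda>l. \<chi> j. \<Sum>i\<le>N. Y j i * l ^ i"])
    show "norm (of_real (s - t0) + w) \<le> \<rho>" if "norm w < R" for w :: complex
      using norm_triangle_ineq[of "of_real (s - t0)" w] that assms R(2) by (simp del: of_real_diff)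
  qed (use R Y_incr_bound in \<open>auto simp: Y_incr_of_real intro!: holomorphic_intros\<close>)
  then show ?thesis by (simp add: DT_F_def)
qed

lemma Y_incr_update_of_real:
  assumes "k \<le> N"
  shows "Y_incr N j (of_real x) + (if j = l then of_real (v - Y l k) * of_real x ^ k else 0) =
           of_real ((\<Sum>i\<le>N. (Y(l := (Y l)(k := v))) j i * x ^ i) - z0 j)"
proof -
  have "(\<Sum>i\<le>N. (Y(l := (Y l)(k := v))) j i * x ^ i) =
          (\<Sum>i\<le>N. Y j i * x ^ i + (if j = l \<and> i = k then (v - Y l k) * x ^ k else 0))"
    by (intro sum.cong) (auto simp: algebra_simps)
  also have "\<dots> = (\<Sum>i\<le>N. Y j i * x ^ i) + (if j = l then (v - Y l k) * x ^ k else 0)"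
    using assms by (simp add: sum.distrib)
  finally show ?thesis by (simp add: Y_incr_of_real)
qed

lemma DT_F_update_eq_higher_deriv_compose_series:
  assumes "k \<le> N" "\<bar>v - Y j0 k\<bar> < \<rho>/2"
  shows "DT_F f N t0 (Y(j0 := (Y j0)(k := v))) =
           Re ((deriv ^^ N) (compose_series (\<lambda>w. w)
                 (\<lambda>j w. Y_incr N j w + (if j = j0 then of_real (v - Y j0 k) else 0) * w ^ k)) 0) / fact N"
proof -
  obtain R where R: "R > 0" "R \<le> \<rho>/2"
    "\<And>w \<nu> j. norm w < R \<Longrightarrow> norm \<nu> < \<rho>/2 \<Longrightarrow> norm (Y_incr N j w + \<nu> * w ^ k) \<le> \<rho>"
    using Y_incr_perturbation_radius[of N k] by blast
  have "(deriv ^^ N) (\<lambda>l. f (t0 + l) (\<chi> j. \<Sum>i\<le>N. (Y(j0 := (Y j0)(k := v))) j i * l ^ i)) 0 =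
          Re ((deriv ^^ N) (compose_series (\<lambda>w. w)
                (\<lambda>j w. Y_incr N j w + (if j = j0 then of_real (v - Y j0 k) else 0) * w ^ k)) 0)"
  proof (rule higher_deriv_compose_series_real[where R = R and u = "\<lambda>l. l"
                                                 and v = "\<lambda>l. \<chi> j. \<Sum>i\<le>N. (Y(j0 := (Y j0)(k := v))) j i * l ^ i"])
    show "norm (Y_incr N j w + (if j = j0 then of_real (v - Y j0 k) else 0) * w ^ k) \<le> \<rho>"
      if "norm w < R" for w j
      using assms(2) radius_pos by (intro R(3) that) (simp flip: of_real_diff)
    show "Y_incr N j (of_real (x - 0)) + (if j = j0 then of_real (v - Y j0 k) else 0) * of_real (x - 0) ^ k =
            of_real ((\<chi> j. \<Sum>i\<le>N. (Y(j0 := (Y j0)(k := v))) j i * x ^ i) $ j - z0 j)" for x j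
      using Y_incr_update_of_real[OF assms(1), where j = j and l = j0 and v = v and x = x]
      by (cases "j = j0") simp_all
  qed (use R in \<open>auto intro!: holomorphic_intros\<close>)
  then show ?thesis by (simp add: DT_F_def)
qed

text \<open>Up to the factors \<open>fst a\<close> and \<open>snd a j\<close>, these are the \<open>m\<close>-th derivatives at \<open>0\<close> of the
  partial derivatives of the monomial \<open>a\<close> with respect to \<open>t0\<close> and to \<open>Y j k\<close>, evaluated at
  \<open>u = w\<close>, \<open>z = Y_incr m w\<close>.\<close>
definition dmon_t :: "nat \<Rightarrow> nat \<times> ('m \<Rightarrow> nat) \<Rightarrow> complex" where
  "dmon_t m a = (deriv ^^ m) (\<lambda>w. w ^ (fst a - 1) * (\<Prod>j\<in>UNIV. Y_incr m j w ^ snd a j)) 0"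

definition dmon_Y :: "nat \<Rightarrow> 'm \<Rightarrow> nat \<Rightarrow> nat \<times> ('m \<Rightarrow> nat) \<Rightarrow> complex" where
  "dmon_Y m j k a = (deriv ^^ m) (\<lambda>w. w ^ k * Y_incr m j w ^ (snd a j - 1) *
                                    (w ^ fst a * (\<Prod>i\<in>UNIV - {j}. Y_incr m i w ^ snd a i))) 0"

lemma deriv_DT_F_t0:
  shows "(\<lambda>a. of_real (c a) * of_nat (fst a) * dmon_t m a) summable_on UNIV"
    and "deriv (\<lambda>s. DT_F f m s Y) t0 = Re (\<Sum>\<^sub>\<infinity>a. of_real (c a) * of_nat (fst a) * dmon_t m a) / fact m"
proof -
  obtain R where R: "R > 0" "R \<le> \<rho>/2"
    "\<And>w \<nu> j. norm w < R \<Longrightarrow> norm \<nu> < \<rho>/2 \<Longrightarrow> norm (Y_incr m j w + \<nu> * w ^ 0) \<le> \<rho>"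
    using Y_incr_perturbation_radius[of m 0] by blast
  have Y_incr_bound: "norm (Y_incr m j w) \<le> \<rho>" if "norm w < R" for w j
    using R(3)[OF that, of 0] radius_pos by simp
  define G where "G a w = (\<Prod>j\<in>UNIV. Y_incr m j w ^ snd a j)" for a :: "nat \<times> ('m \<Rightarrow> nat)" and w
  have \<delta>: "\<rho>/2 > 0" using radius_pos by simp
  obtain D where D: "((\<lambda>\<mu>. (deriv ^^ m) (\<lambda>w. \<Sum>\<^sub>\<infinity>a. of_real (c a) * ((w + \<mu> * 1) ^ fst a * G a w)) 0)
                        has_field_derivative D) (at 0)"
      "((\<lambda>a. of_real (c a) * of_nat (fst a) * (deriv ^^ m) (\<lambda>w. 1 * w ^ (fst a - 1) * G a w) 0) has_sum D) UNIV"
  proof (rule has_field_derivative_higher_deriv_param_series[OF R(1) \<delta>, THEN exE], (elim conjE)?)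
    fix a :: "nat \<times> ('m \<Rightarrow> nat)" and \<mu> w :: complex
    assume "norm \<mu> < \<rho>/2" "norm w < R"
    then have "norm (mv_monomial a (w + \<mu> * 1) (\<lambda>j. Y_incr m j w)) \<le> \<rho> ^ mv_degree a"
      using norm_triangle_ineq[of w \<mu>] R Y_incr_bound by (intro norm_mv_monomial_le) auto
    then show "norm (of_real (c a) * ((w + \<mu> * 1) ^ fst a * G a w)) \<le> \<bar>c a\<bar> * \<rho> ^ mv_degree a"
      by (simp add: norm_mult mv_monomial_def G_def mult_left_mono)
  qed (use abs_summable in \<open>auto simp: G_def intro!: holomorphic_intros\<close>)
  have "deriv (\<lambda>s. DT_F f m s Y) t0 = Re D / fact m"
    by (rule deriv_Re_complex_restriction[OF D(1) \<delta>])
       (simp add: DT_F_eq_higher_deriv_compose_series compose_series_def[abs_def] mv_monomial_def G_def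
                  add.commute)
  with D(2) show "(\<lambda>a. of_real (c a) * of_nat (fst a) * dmon_t m a) summable_on UNIV"
    and "deriv (\<lambda>s. DT_F f m s Y) t0 = Re (\<Sum>\<^sub>\<infinity>a. of_real (c a) * of_nat (fst a) * dmon_t m a) / fact m"
    by (auto simp: dmon_t_def G_def infsumI has_sum_imp_summable)
qed

lemma deriv_DT_F_Y:
  assumes "k \<le> m"
  shows "(\<lambda>a. of_real (c a) * of_nat (snd a j0) * dmon_Y m j0 k a) summable_on UNIV"
    and "deriv (\<lambda>v. DT_F f m t0 (Y(j0 := (Y j0)(k := v)))) (Y j0 k) =
           Re (\<Sum>\<^sub>\<infinity>a. of_real (c a) * of_nat (snd a j0) * dmon_Y m j0 k a) / fact m"
proof -
  obtain R where R: "R > 0" "R \<le> \<rho>/2"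
    "\<And>w \<nu> j. norm w < R \<Longrightarrow> norm \<nu> < \<rho>/2 \<Longrightarrow> norm (Y_incr m j w + \<nu> * w ^ k) \<le> \<rho>"
    using Y_incr_perturbation_radius[of m k] by blast
  have \<delta>: "\<rho>/2 > 0" using radius_pos by simp
  define G where "G a w = w ^ fst a * (\<Prod>i\<in>UNIV - {j0}. Y_incr m i w ^ snd a i)"
    for a :: "nat \<times> ('m \<Rightarrow> nat)" and w
  have monomial: "mv_monomial a w (\<lambda>j. Y_incr m j w + (if j = j0 then \<nu> else 0) * w ^ k) =
                    (Y_incr m j0 w + \<nu> * w ^ k) ^ snd a j0 * G a w" for a \<nu> w
  proof -
    have "(\<Prod>i\<in>UNIV - {j0}. (Y_incr m i w + (if i = j0 then \<nu> else 0) * w ^ k) ^ snd a i) =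
            (\<Prod>i\<in>UNIV - {j0}. Y_incr m i w ^ snd a i)"
      by (rule prod.cong) auto
    then show ?thesis by (simp only: mv_monomial_split[of _ _ _ j0] G_def) simp
  qed
  obtain D where D: "((\<lambda>\<nu>. (deriv ^^ m) (\<lambda>w. \<Sum>\<^sub>\<infinity>a. of_real (c a) * ((Y_incr m j0 w + \<nu> * w ^ k) ^ snd a j0 * G a w)) 0)
                        has_field_derivative D) (at 0)"
      "((\<lambda>a. of_real (c a) * of_nat (snd a j0) * (deriv ^^ m) (\<lambda>w. w ^ k * Y_incr m j0 w ^ (snd a j0 - 1) * G a w) 0)
          has_sum D) UNIV"
  proof (rule has_field_derivative_higher_deriv_param_series[OF R(1) \<delta>, THEN exE], (elim conjE)?)
    fix a :: "nat \<times> ('m \<Rightarrow> nat)" and \<nu> w :: complex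
    assume "norm \<nu> < \<rho>/2" "norm w < R"
    then have "norm (mv_monomial a w (\<lambda>j. Y_incr m j w + (if j = j0 then \<nu> else 0) * w ^ k)) \<le> \<rho> ^ mv_degree a"
      using R radius_pos by (intro norm_mv_monomial_le R(3)) auto
    then show "norm (of_real (c a) * ((Y_incr m j0 w + \<nu> * w ^ k) ^ snd a j0 * G a w)) \<le> \<bar>c a\<bar> * \<rho> ^ mv_degree a"
      by (simp add: norm_mult monomial mult_left_mono)
  qed (use abs_summable in \<open>auto simp: G_def intro!: holomorphic_intros\<close>)
  have "deriv (\<lambda>v. DT_F f m t0 (Y(j0 := (Y j0)(k := v)))) (Y j0 k) = Re D / fact m"
    by (rule deriv_Re_complex_restriction[OF D(1) \<delta>])
       (simp add: DT_F_update_eq_higher_deriv_compose_series[OF assms] compose_series_def[abs_def]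
                  monomial del: of_real_diff)
  with D(2) show "(\<lambda>a. of_real (c a) * of_nat (snd a j0) * dmon_Y m j0 k a) summable_on UNIV"
    and "deriv (\<lambda>v. DT_F f m t0 (Y(j0 := (Y j0)(k := v)))) (Y j0 k) =
           Re (\<Sum>\<^sub>\<infinity>a. of_real (c a) * of_nat (snd a j0) * dmon_Y m j0 k a) / fact m"
    by (auto simp: dmon_Y_def G_def infsumI has_sum_imp_summable)
qed

lemma higher_deriv_Suc_mv_monomial_Y_incr:
  "(deriv ^^ Suc m) (\<lambda>w. mv_monomial a w (\<lambda>j. Y_incr (Suc m) j w)) 0 =
     of_nat (fst a) * dmon_t m a +
     (\<Sum>j\<in>UNIV. \<Sum>k<Suc m. of_nat (Suc k) * of_real (Y j (Suc k)) * (of_nat (snd a j) * dmon_Y m j k a))"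
  unfolding mv_monomial_def dmon_t_def dmon_Y_def
  by (rule higher_deriv_Suc_power_prod_taylor_incr_jet[where c = "\<lambda>j i. of_real (Y j i)"]) simp

lemma higher_deriv_Suc_compose_series:
  "(deriv ^^ Suc m) (compose_series (\<lambda>w. w) (Y_incr (Suc m))) 0 =
     (\<Sum>\<^sub>\<infinity>a. of_real (c a) * of_nat (fst a) * dmon_t m a) +
     (\<Sum>j\<in>UNIV. \<Sum>k<Suc m. of_nat (Suc k) * of_real (Y j (Suc k)) *
                             (\<Sum>\<^sub>\<infinity>a. of_real (c a) * of_nat (snd a j) * dmon_Y m j k a))"
    (is "_ = ?V")
proof -
  obtain R where R: "R > 0" "\<And>w j. norm w < R \<Longrightarrow> norm (Y_incr (Suc m) j w) < \<rho>"
    using Y_incr_small[OF radius_pos] by blast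
  have "((\<lambda>a. of_real (c a) * (deriv ^^ Suc m) (\<lambda>w. mv_monomial a w (\<lambda>j. Y_incr (Suc m) j w)) 0)
          has_sum (deriv ^^ Suc m) (compose_series (\<lambda>w. w) (Y_incr (Suc m))) 0) UNIV"
    using R radius_pos
    by (intro has_sum_higher_deriv_compose_series[where S = "ball 0 (min R \<rho>)"])
       (auto intro!: holomorphic_intros less_imp_le)
  moreover have "((\<lambda>a. of_real (c a) * of_nat (fst a) * dmon_t m a +
                     (\<Sum>j\<in>UNIV. \<Sum>k<Suc m. of_nat (Suc k) * of_real (Y j (Suc k)) *
                        (of_real (c a) * of_nat (snd a j) * dmon_Y m j k a))) has_sum ?V) UNIV"
    using deriv_DT_F_t0(1) deriv_DT_F_Y(1)
    by (intro has_sum_add has_sum_infsum has_sum_sum finite_UNIV finite_lessThan has_sum_cmult_right) auto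
  ultimately show ?thesis
    by (simp add: higher_deriv_Suc_mv_monomial_Y_incr distrib_left sum_distrib_left mult_ac has_sum_unique
             del: funpow.simps)
qed

lemma DT_F_recursion:
  assumes "n \<ge> 1"
  shows "DT_F f n t0 Y = (1 / real n) *
           (deriv (\<lambda>s. DT_F f (n - 1) s Y) t0
            + (\<Sum>j\<in>UNIV. \<Sum>k<n. real (k + 1) * Y j (k + 1) *
                 deriv (\<lambda>v. DT_F f (n - 1) t0 (Y(j := (Y j)(k := v)))) (Y j k)))"
proof -
  obtain m where n: "n = Suc m" using assms by (cases n) auto
  have "DT_F f n t0 Y = Re ((deriv ^^ n) (compose_series (\<lambda>w. w) (Y_incr n)) 0) / fact n"
    using DT_F_eq_higher_deriv_compose_series[of t0] radius_pos by simp
  also have "Re ((deriv ^^ n) (compose_series (\<lambda>w. w) (Y_incr n)) 0) =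
               fact m * (deriv (\<lambda>s. DT_F f (n - 1) s Y) t0 + (\<Sum>j\<in>UNIV. \<Sum>k<n. real (k + 1) * Y j (k + 1) *
                           deriv (\<lambda>v. DT_F f (n - 1) t0 (Y(j := (Y j)(k := v)))) (Y j k)))"
    using deriv_DT_F_t0(2)[of m] deriv_DT_F_Y(2)[of _ m]
    by (simp add: n higher_deriv_Suc_compose_series Re_sum distrib_left sum_distrib_left mult_ac
             del: funpow.simps)
  also have "fact n = real n * fact m"
    using n by simp
  also have "fact m * X / (real n * fact m) = 1 / real n * X" for X :: real
    by simp
  finally show ?thesis .
qed

end

locale curve_expansion = DT_expansion f c t0 \<rho> z0 Y
  for f :: "real \<Rightarrow> real^'m \<Rightarrow> real" and c :: "nat \<times> ('m::finite \<Rightarrow> nat) \<Rightarrow> real"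
    and t0 \<rho> :: real and z0 :: "'m \<Rightarrow> real" and Y :: "'m \<Rightarrow> nat \<Rightarrow> real" +
  fixes y :: "'m \<Rightarrow> real \<Rightarrow> real" and D :: "real set"
  assumes y_analytic: "\<And>j. real_analytic_on (y j) D" and t0_in_D: "t0 \<in> D"
    and Y_eq: "\<And>j i. Y j i = (deriv ^^ i) (y j) t0 / fact i"
begin

lemma curve_complex_extension:
  obtains R \<psi> where "R > 0" "\<And>j. \<psi> j holomorphic_on ball 0 R" "\<And>w j. norm w < R \<Longrightarrow> norm (\<psi> j w) \<le> \<rho>"
    "\<And>x j. \<bar>x - t0\<bar> < R \<Longrightarrow> \<psi> j (of_real (x - t0)) = of_real (y j x - z0 j)"
    "\<And>j. jet_eq n (\<psi> j) (Y_incr n j)"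
proof -
  obtain R0 g where R0: "R0 > 0" and g_hol: "\<And>j. g j holomorphic_on ball 0 R0"
    and g: "\<And>j x. \<bar>x - t0\<bar> < R0 \<Longrightarrow> g j (of_real (x - t0)) = of_real (y j x)"
      "\<And>j l. (deriv ^^ l) (g j) 0 = of_real ((deriv ^^ l) (y j) t0)"
    by (rule real_analytic_on_complex_extension_family[OF y_analytic t0_in_D]) (rule that)
  define \<psi> where "\<psi> j w = g j w - of_real (z0 j)" for j w
  have \<psi>_hol: "\<psi> j holomorphic_on ball 0 R0" for j
    unfolding \<psi>_def[abs_def] using g_hol by (intro holomorphic_intros)
  have \<psi>_deriv: "(deriv ^^ l) (\<psi> j) 0 = (if l = 0 then 0 else fact l * of_real (Y j l))" for j l
  proof -
    have "(deriv ^^ l) (\<psi> j) 0 = (deriv ^^ l) (g j) 0 - (deriv ^^ l) (\<lambda>w. of_real (z0 j)) 0"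
      unfolding \<psi>_def[abs_def]
      by (rule higher_deriv_diff[OF g_hol holomorphic_on_const open_ball]) (use R0 in simp)
    then show ?thesis
      using Y_0[of j] by (simp add: g(2) Y_eq)
  qed
  obtain R1 where R1: "R1 > 0" "\<And>w j. norm w < R1 \<Longrightarrow> norm (\<psi> j w) < \<rho>"
  proof -
    have "isCont (\<psi> j) 0" for j
      using holomorphic_on_imp_continuous_on[OF \<psi>_hol[of j]] R0
      by (auto simp: continuous_on_eq_continuous_at)
    moreover have "\<psi> j 0 = 0" for j
      using \<psi>_deriv[where j = j and l = 0] by simp
    ultimately show ?thesis using ex_ball_uniformly_small[of \<psi>, OF _ _ radius_pos] that by force
  qed
  show ?thesis
  proof (rule that[of "min R0 R1" \<psi>])
    show "\<psi> j holomorphic_on ball 0 (min R0 R1)" for j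
      by (rule holomorphic_on_subset[OF \<psi>_hol]) auto
    show "\<psi> j (of_real (x - t0)) = of_real (y j x - z0 j)" if "\<bar>x - t0\<bar> < min R0 R1" for x j
      using g(1)[of x j] that by (simp add: \<psi>_def)
    show "jet_eq n (\<psi> j) (Y_incr n j)" for j
      by (auto simp: jet_eq_def \<psi>_deriv higher_deriv_taylor_incr_0)
  qed (use R0 R1 in \<open>auto intro: less_imp_le\<close>)
qed

lemma DT_F_eq_higher_deriv_curve:
  "DT_F f n t0 Y = (deriv ^^ n) (\<lambda>t. f t (\<chi> j. y j t)) t0 / fact n"
proof -
  obtain R1 \<psi> where \<psi>: "R1 > 0" "\<And>j. \<psi> j holomorphic_on ball 0 R1" "\<And>w j. norm w < R1 \<Longrightarrow> norm (\<psi> j w) \<le> \<rho>"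
    "\<And>x j. \<bar>x - t0\<bar> < R1 \<Longrightarrow> \<psi> j (of_real (x - t0)) = of_real (y j x - z0 j)"
    "\<And>j. jet_eq n (\<psi> j) (Y_incr n j)"
    by (rule curve_complex_extension) (rule that)
  obtain R2 where R2: "R2 > 0" "\<And>w j. norm w < R2 \<Longrightarrow> norm (Y_incr n j w) < \<rho>"
    using Y_incr_small[OF radius_pos] by blast
  define R where "R = min (min R1 R2) \<rho>"
  have R: "R > 0" using \<psi>(1) R2(1) radius_pos by (simp add: R_def)
  have \<psi>_hol: "\<psi> j holomorphic_on ball 0 R" for j
    by (rule holomorphic_on_subset[OF \<psi>(2)]) (auto simp: R_def)
  have "(deriv ^^ n) (\<lambda>t. f t (\<chi> j. y j t)) t0 = Re ((deriv ^^ n) (compose_series (\<lambda>w. w) \<psi>) 0)"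
    by (rule higher_deriv_compose_series_real[where R = R and u = "\<lambda>x. x - t0" and v = "\<lambda>x. \<chi> j. y j x"])
       (use R \<psi> \<psi>_hol in \<open>auto simp: R_def\<close>)
  also have "(deriv ^^ n) (compose_series (\<lambda>w. w) \<psi>) 0 = (deriv ^^ n) (compose_series (\<lambda>w. w) (Y_incr n)) 0"
    by (rule higher_deriv_compose_series_jet_eq[OF R _ \<psi>_hol _ _ _ _ \<psi>(5)])
       (use \<psi> R2 in \<open>auto simp: R_def intro: less_imp_le intro!: holomorphic_intros\<close>)
  finally show ?thesis
    using DT_F_eq_higher_deriv_compose_series[of t0] radius_pos by simp
qed

end

lemma mv_analytic_on_local_expansion:
  fixes f :: "real \<Rightarrow> real^'m \<Rightarrow> real" and z0 :: "'m \<Rightarrow> real"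
  assumes "mv_analytic_on f U" "(t0, \<chi> j. z0 j) \<in> U"
  obtains c \<rho> where "local_expansion f c t0 \<rho> z0"
proof -
  obtain r c where r: "r > 0" and hs: "\<And>s z. dist (s, z) (t0, \<chi> j. z0 j) < r \<Longrightarrow>
      ((\<lambda>(a, \<alpha>). c (a, \<alpha>) * (s - t0) ^ a * (\<Prod>j\<in>UNIV. (z $ j - z0 j) ^ \<alpha> j)) has_sum f s z) UNIV"
    using assms unfolding mv_analytic_on_def by fastforce
  define \<rho> where "\<rho> = r / (2 * (1 + real CARD('m)))"
  have \<rho>: "\<rho> > 0" using r by (simp add: \<rho>_def)
  have expansion: "((\<lambda>a. c a * mv_monomial a u (\<lambda>j. v $ j - z0 j)) has_sum f (t0 + u) v) UNIV"
    if u: "\<bar>u\<bar> \<le> \<rho>" and v: "\<And>j. \<bar>v $ j - z0 j\<bar> \<le> \<rho>" for u v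
  proof -
    have "dist v (\<chi> j. z0 j) \<le> (\<Sum>j\<in>UNIV. \<bar>v $ j - z0 j\<bar>)"
      using norm_le_l1_cart[of "v - (\<chi> j. z0 j)"] by (simp add: dist_norm)
    also have "\<dots> \<le> real CARD('m) * \<rho>"
      using sum_bounded_above[of UNIV "\<lambda>j. \<bar>v $ j - z0 j\<bar>" \<rho>] v by simp
    finally have "dist (t0 + u, v) (t0, \<chi> j. z0 j) \<le> \<rho> + real CARD('m) * \<rho>"
      using u dist_Pair_Pair[of "t0 + u" v t0] sqrt_sum_squares_le_sum_abs[of u "dist v (\<chi> j. z0 j)"]
      by (simp add: dist_real_def)
    also have "\<dots> = r / 2"
      using of_nat_0_le_iff[of "CARD('m)"] unfolding \<rho>_def by (simp add: field_simps add_nonneg_eq_0_iff)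
    also have "\<dots> < r"
      using r by simp
    finally have "dist (t0 + u, v) (t0, \<chi> j. z0 j) < r" .
    from hs[OF this] show ?thesis
      by (simp add: case_prod_unfold mv_monomial_def mult.assoc)
  qed
  \<comment> \<open>The expansion at the corner \<open>(t0 + \<rho>, z0 + \<rho>)\<close> of the polydisc.\<close>
  have "(\<lambda>a. c a * \<rho> ^ mv_degree a) summable_on UNIV"
    using has_sum_imp_summable[OF expansion[of \<rho> "\<chi> j. z0 j + \<rho>"]] \<rho>
    by (simp add: mv_monomial_def mv_degree_def power_add power_sum)
  then have "(\<lambda>a. norm (c a * \<rho> ^ mv_degree a)) summable_on UNIV"
    by (rule summable_on_iff_abs_summable_on_real[THEN iffD1])
  then have "(\<lambda>a. \<bar>c a\<bar> * \<rho> ^ mv_degree a) summable_on UNIV"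
    using \<rho> by (simp add: abs_mult)
  with \<rho> have "local_expansion f c t0 \<rho> z0"
    by unfold_locales (assumption | rule expansion)+
  then show ?thesis by (rule that)
qed

theorem corollary2:
  fixes f :: "real \<Rightarrow> real^'m \<Rightarrow> real"
    and y :: "'m \<Rightarrow> real \<Rightarrow> real"
    and Y :: "'m \<Rightarrow> nat \<Rightarrow> real"
    and D :: "real set" and U :: "(real \<times> (real^'m)) set" and t0 :: real
  assumes "open D" and "is_interval D" and "t0 \<in> D"
    and "\<forall>j. real_analytic_on (y j) D"
    and "Y = (\<lambda>j i. (deriv ^^ i) (y j) t0 / fact i)"
    and "open U" and "(\<lambda>t. (t, \<chi> j. y j t)) ` D \<subseteq> U"
    and "mv_analytic_on f U"
    and "\<not> product_form_on f U"
  shows "(\<forall>n. DT_F f n t0 Y = (deriv ^^ n) (\<lambda>t. f t (\<chi> j. y j t)) t0 / fact n)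
     \<and> DT_F f 0 t0 Y = f t0 (\<chi> j. Y j 0)
     \<and> (\<forall>n\<ge>1. DT_F f n t0 Y =
          (1 / real n) *
            (deriv (\<lambda>s. DT_F f (n - 1) s Y) t0
             + (\<Sum>j\<in>UNIV. \<Sum>k<n. real (k + 1) * Y j (k + 1) *
                  deriv (\<lambda>v. DT_F f (n - 1) t0 (Y(j := (Y j)(k := v)))) (Y j k))))"
proof -
  define z0 where "z0 j = y j t0" for j
  have "(t0, \<chi> j. z0 j) \<in> U"
    using assms(3,7) by (auto simp: z0_def)
  then obtain c \<rho> where "local_expansion f c t0 \<rho> z0"
    using mv_analytic_on_local_expansion[OF assms(8)] by blast
  moreover have "Y j 0 = z0 j" "Y j i = (deriv ^^ i) (y j) t0 / fact i" for j i
    using assms(5) by (simp_all add: z0_def)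
  ultimately interpret curve_expansion f c t0 \<rho> z0 Y y D
    using assms(3,4)
    by (intro curve_expansion.intro DT_expansion.intro DT_expansion_axioms.intro
              curve_expansion_axioms.intro) auto
  show ?thesis
    using DT_F_eq_higher_deriv_curve DT_F_recursion by (simp add: DT_F_def)
qed

end
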